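(* Let $R''\subseteq R\subseteq S_n$ be the top-$k$ partial rankings $R: a_1\succ\cdots\succ a_l\succ[n]\setminus\{a_1,\dots,a_l\}$ and $R'': a_1\succ\cdots\succ a_l\succ a_{l+1}\succ\cdots\succ a_m\succ[n]\setminus\{a_1,\dots,a_m\}$ with $l\le m$. Then for every $\sigma\in R$, $$d(\sigma,\Pi_{R''}(\sigma))=\big((n-l)-(m-l)\big)(m-l)+\binom{m-l}2-d\big(A_R(\sigma),\Pi_{R''}(A_R(\sigma))\big).$$
   Context: $S_n$ is the symmetric group on $[n]$; $\sigma\in S_n$ is identified with the full ranking $\sigma(1)\succ\cdots\succ\sigma(n)$. For distinct items $x,y$, $\{x,y\}$ is discordant for $\sigma,\tau$ if $(\sigma^{-1}(x)-\sigma^{-1}(y))(\tau^{-1}(x)-\tau^{-1}(y))<0$. The Kendall distance $d(\sigma,\tau)$ is the number of unordered discordant pairs. For $0\le k\le n$ and distinct $c_1,\dots,c_k\in[n]$, the top-$k$ partial ranking $Q$: $c_1\succ\cdots\succ c_k\succ[n]\setminus\{c_1,\dots,c_k\}$ is the set $\{\sigma\in S_n:\sigma(i)=c_i,\ i\le k\}$; its antithetic operator $A_Q:Q\to Q$ is $A_Q(\sigma)(i)=c_i$ for $i\le k$ and $A_Q(\sigma)(k+j)=\sigma(n+1-j)$ for $j=1,\dots,n-k$. For $\tau\in S_n$, $\Pi_Q(\tau)$ denotes the unique element of $Q$ minimising $\rho\mapsto d(\rho,\tau)$ over $\rho\in Q$. *)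

theory Defs
  imports "HOL-Combinatorics.Permutations"
begin

text \<open>A full ranking of the items [n] = {1..n} is a permutation sigma of {1..n}
  (identity outside {1..n}); sigma i is the item at position i.\<close>

definition kendall :: "nat \<Rightarrow> (nat \<Rightarrow> nat) \<Rightarrow> (nat \<Rightarrow> nat) \<Rightarrow> nat" where
  "kendall n \<sigma> \<tau> = card {(x, y). x \<in> {1..n} \<and> y \<in> {1..n} \<and> x < y \<and>
      (int (inv \<sigma> x) - int (inv \<sigma> y)) * (int (inv \<tau> x) - int (inv \<tau> y)) < 0}"

definition topk :: "nat \<Rightarrow> nat list \<Rightarrow> (nat \<Rightarrow> nat) set" where
  "topk n cs = {\<sigma>. \<sigma> permutes {1..n} \<and> (\<forall>i<length cs. \<sigma> (i + 1) = cs ! i)}"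

definition antithetic :: "nat \<Rightarrow> nat list \<Rightarrow> (nat \<Rightarrow> nat) \<Rightarrow> (nat \<Rightarrow> nat)" where
  "antithetic n cs \<sigma> = (\<lambda>i. if 1 \<le> i \<and> i \<le> length cs then cs ! (i - 1)
      else if length cs < i \<and> i \<le> n then \<sigma> (n + 1 - (i - length cs)) else i)"

definition proj :: "nat \<Rightarrow> nat list \<Rightarrow> (nat \<Rightarrow> nat) \<Rightarrow> (nat \<Rightarrow> nat)" where
  "proj n cs \<tau> = (THE \<rho>. \<rho> \<in> topk n cs \<and> (\<forall>\<rho>'\<in>topk n cs. kendall n \<rho> \<tau> \<le> kendall n \<rho>' \<tau>))"

end

theory Submission
  imports Defs
begin

text \<open>Split the discordant pairs of a ranking and its projection onto \<open>R''\<close> according to whether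
  they meet the items \<open>a\<^sub>1, \<dots>, a\<^sub>m\<close> fixed by \<open>R''\<close>. The projection orders the remaining items
  as the ranking does, so only pairs meeting the fixed items count, and these may be counted
  against any fixed \<open>\<rho> \<in> R''\<close>. The antithetic operator reverses all positions below \<open>a\<^sub>l\<close>, so a
  pair of items placed below \<open>a\<^sub>l\<close>, at least one of them fixed by \<open>R''\<close>, is discordant with \<open>\<rho>\<close>
  for exactly one of \<open>\<sigma>\<close> and \<open>A\<^sub>R(\<sigma>)\<close>, while pairs meeting \<open>a\<^sub>1, \<dots>, a\<^sub>l\<close> are concordant
  for both. Hence the two distances add up to the number of such pairs,
  \<open>(n - m)(m - l) + (m - l choose 2)\<close>.\<close>

definition discordant :: "(nat \<Rightarrow> nat) \<Rightarrow> (nat \<Rightarrow> nat) \<Rightarrow> nat \<Rightarrow> nat \<Rightarrow> bool" where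
  "discordant f g x y \<longleftrightarrow> (f x < f y \<and> g y < g x) \<or> (f y < f x \<and> g x < g y)"

definition discordant_pairs ::
    "nat \<Rightarrow> (nat \<Rightarrow> nat) \<Rightarrow> (nat \<Rightarrow> nat) \<Rightarrow> (nat \<Rightarrow> nat \<Rightarrow> bool) \<Rightarrow> (nat \<times> nat) set" where
  "discordant_pairs n f g P = {(x, y). x \<in> {1..n} \<and> y \<in> {1..n} \<and> x < y \<and> P x y \<and> discordant f g x y}"

definition ordered_pairs :: "nat set \<Rightarrow> (nat \<times> nat) set" where
  "ordered_pairs A = {(x, y). x \<in> A \<and> y \<in> A \<and> x < y}"

lemma kendall_eq_card_discordant_pairs:
  "kendall n \<sigma> \<tau> = card (discordant_pairs n (inv \<sigma>) (inv \<tau>) (\<lambda>_ _. True))"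
  unfolding kendall_def discordant_pairs_def discordant_def
  by (rule arg_cong[where f = card]) (auto simp: mult_less_0_iff)

lemma discordant_commute: "discordant f g y x \<longleftrightarrow> discordant f g x y"
  by (auto simp: discordant_def)

lemma kendall_commute: "kendall n \<sigma> \<tau> = kendall n \<tau> \<sigma>"
  by (simp add: kendall_def mult.commute)

lemma finite_discordant_pairs: "finite (discordant_pairs n f g P)"
  by (rule finite_subset[of _ "{1..n} \<times> {1..n}"]) (auto simp: discordant_pairs_def)

lemma kendall_split:
  "kendall n \<sigma> \<tau> = card (discordant_pairs n (inv \<sigma>) (inv \<tau>) (\<lambda>x y. x \<in> S \<or> y \<in> S))
     + card (discordant_pairs n (inv \<sigma>) (inv \<tau>) (\<lambda>x y. x \<notin> S \<and> y \<notin> S))"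
proof -
  let ?D = "discordant_pairs n (inv \<sigma>) (inv \<tau>)"
  have "?D (\<lambda>_ _. True) = ?D (\<lambda>x y. x \<in> S \<or> y \<in> S) \<union> ?D (\<lambda>x y. x \<notin> S \<and> y \<notin> S)"
    and "?D (\<lambda>x y. x \<in> S \<or> y \<in> S) \<inter> ?D (\<lambda>x y. x \<notin> S \<and> y \<notin> S) = {}"
    by (auto simp: discordant_pairs_def)
  then show ?thesis
    by (simp add: kendall_eq_card_discordant_pairs card_Un_disjoint finite_discordant_pairs)
qed

lemma card_ordered_pairs:
  assumes "finite A"
  shows "card (ordered_pairs A) = card A choose 2"
proof -
  have "bij_betw (\<lambda>(x, y). {x, y}) (ordered_pairs A) {B. B \<subseteq> A \<and> card B = 2}"
  proof (rule bij_betw_imageI)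
    show "inj_on (\<lambda>(x, y). {x, y}) (ordered_pairs A)"
      by (auto simp: inj_on_def ordered_pairs_def doubleton_eq_iff)
    show "(\<lambda>(x, y). {x, y}) ` ordered_pairs A = {B. B \<subseteq> A \<and> card B = 2}"
    proof (intro equalityI subsetI)
      fix B assume "B \<in> {B. B \<subseteq> A \<and> card B = 2}"
      then obtain x y where B: "B = {x, y}" "x < y" "B \<subseteq> A"
        by (auto simp: card_2_iff) (metis insert_commute linorder_neqE_nat)
      then show "B \<in> (\<lambda>(x, y). {x, y}) ` ordered_pairs A"
        by (auto simp: ordered_pairs_def image_iff intro!: bexI[of _ "(x, y)"])
    qed (auto simp: ordered_pairs_def)
  qed
  then show ?thesis
    using n_subsets[OF assms, of 2] by (simp add: bij_betw_same_card)
qed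

lemma choose_two_add: "(a + b) choose 2 = (a choose 2) + a * b + (b choose 2)"
  by (induction b) (simp_all add: numeral_2_eq_2)

lemma card_ordered_pairs_Diff:
  assumes "T \<subseteq> S" "S \<subseteq> U" "finite U"
  shows "card (ordered_pairs (U - T) - ordered_pairs (U - S)) =
      card (U - S) * card (S - T) + (card (S - T) choose 2)"
proof -
  have "ordered_pairs (U - S) \<subseteq> ordered_pairs (U - T)"
    using assms(1) by (auto simp: ordered_pairs_def)
  moreover have "finite (ordered_pairs (U - S))"
    by (rule finite_subset[of _ "U \<times> U"]) (auto simp: ordered_pairs_def assms(3))
  moreover have "card (U - T) = card (U - S) + card (S - T)"
  proof -
    have "U - T = (U - S) \<union> (S - T)" using assms(1,2) by auto
    moreover have "(U - S) \<inter> (S - T) = {}" by auto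
    ultimately show ?thesis using assms finite_subset[OF assms(2)]
      by (simp add: card_Un_disjoint)
  qed
  ultimately show ?thesis
    by (simp add: card_Diff_subset card_ordered_pairs assms(3) choose_two_add)
qed

lemma length_le_if_distinct_subset: "distinct cs \<Longrightarrow> set cs \<subseteq> {1..n} \<Longrightarrow> length cs \<le> n"
  using card_mono[of "{1..n}" "set cs"] distinct_card[of cs] by simp

lemma topk_permutes: "\<rho> \<in> topk n cs \<Longrightarrow> \<rho> permutes {1..n}"
  by (simp add: topk_def)

lemma topk_inv_nth:
  assumes "\<rho> \<in> topk n cs" "i < length cs"
  shows "inv \<rho> (cs ! i) = i + 1"
  using assms permutes_inv_eq[OF topk_permutes[OF assms(1)]] by (simp add: topk_def)

lemma topk_inv_in_set:
  assumes "\<rho> \<in> topk n cs" "x \<in> set cs"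
  shows "1 \<le> inv \<rho> x \<and> inv \<rho> x \<le> length cs"
  using assms topk_inv_nth[OF assms(1)] by (auto simp: in_set_conv_nth)

lemma topk_inv_eq_on_set:
  assumes "\<rho> \<in> topk n cs" "\<rho>' \<in> topk n cs" "x \<in> set cs"
  shows "inv \<rho> x = inv \<rho>' x"
  using assms topk_inv_nth[OF assms(1)] topk_inv_nth[OF assms(2)] by (auto simp: in_set_conv_nth)

lemma permutes_inv_in_range:
  assumes "\<rho> permutes {1..n}" "y \<in> {1..n}"
  shows "1 \<le> inv \<rho> y \<and> inv \<rho> y \<le> n"
  using permutes_in_image[OF permutes_inv[OF assms(1)], of y] assms(2) by auto

lemma topk_inv_notin_set:
  assumes "\<rho> \<in> topk n cs" "y \<in> {1..n}" "y \<notin> set cs"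
  shows "length cs < inv \<rho> y \<and> inv \<rho> y \<le> n"
proof (rule ccontr)
  assume "\<not> ?thesis"
  with permutes_inv_in_range[OF topk_permutes[OF assms(1)] assms(2)]
  have i: "inv \<rho> y - 1 < length cs" "inv \<rho> y - 1 + 1 = inv \<rho> y" by auto
  moreover have "\<rho> (inv \<rho> y) = y"
    using permutes_inv_eq[OF topk_permutes[OF assms(1)]] by blast
  moreover have "\<rho> (inv \<rho> y - 1 + 1) = cs ! (inv \<rho> y - 1)"
    using assms(1) i(1) unfolding topk_def by blast
  ultimately have "y = cs ! (inv \<rho> y - 1)"
    by simp
  then show False using i(1) assms(3) by (metis nth_mem)
qed

lemma topk_inv_image_compl:
  assumes "\<rho> \<in> topk n cs" "distinct cs" "set cs \<subseteq> {1..n}"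
  shows "inv \<rho> ` ({1..n} - set cs) = {length cs + 1..n}"
proof (rule card_seteq)
  show "inv \<rho> ` ({1..n} - set cs) \<subseteq> {length cs + 1..n}"
    using topk_inv_notin_set[OF assms(1)] by force
  have "card (inv \<rho> ` ({1..n} - set cs)) = card ({1..n} - set cs)"
    by (rule card_image, rule permutes_inj_on[OF permutes_inv[OF topk_permutes[OF assms(1)]]])
  also have "\<dots> = n - length cs"
    using assms(3) by (simp add: card_Diff_subset distinct_card[OF assms(2)])
  finally show "card {length cs + 1..n} \<le> card (inv \<rho> ` ({1..n} - set cs))" by simp
qed simp

lemma discordant_pairs_meeting_topk_eq:
  assumes "\<rho> \<in> topk n cs" "\<rho>' \<in> topk n cs"
  shows "discordant_pairs n (inv \<rho>) g (\<lambda>x y. x \<in> set cs \<or> y \<in> set cs) =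
      discordant_pairs n (inv \<rho>') g (\<lambda>x y. x \<in> set cs \<or> y \<in> set cs)"
proof -
  have "discordant (inv \<rho>) g x y \<longleftrightarrow> discordant (inv \<rho>') g x y"
    if "x \<in> {1..n}" "y \<in> {1..n}" "x \<in> set cs \<or> y \<in> set cs" for x y
    using that topk_inv_eq_on_set[OF assms, of x] topk_inv_eq_on_set[OF assms, of y]
      topk_inv_in_set[OF assms(1)] topk_inv_notin_set[OF assms(1)]
      topk_inv_notin_set[OF assms(2)]
    unfolding discordant_def by (cases "x \<in> set cs"; cases "y \<in> set cs") fastforce+
  then show ?thesis unfolding discordant_pairs_def by blast
qed

lemma kendall_topk_split:
  assumes "\<rho> \<in> topk n cs" "\<rho>' \<in> topk n cs"
  shows "kendall n \<rho> \<tau> =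
      card (discordant_pairs n (inv \<rho>') (inv \<tau>) (\<lambda>x y. x \<in> set cs \<or> y \<in> set cs))
    + card (discordant_pairs n (inv \<rho>) (inv \<tau>) (\<lambda>x y. x \<notin> set cs \<and> y \<notin> set cs))"
  using kendall_split[of n \<rho> \<tau> "set cs"] discordant_pairs_meeting_topk_eq[OF assms] by simp

definition rank :: "nat set \<Rightarrow> (nat \<Rightarrow> nat) \<Rightarrow> nat \<Rightarrow> nat" where
  "rank V f x = card {y \<in> V. f y < f x}"

lemma rank_less_rank:
  assumes "finite V" "x \<in> V" "y \<in> V" "f x < f y"
  shows "rank V f x < rank V f y"
  unfolding rank_def using assms by (intro psubset_card_mono) auto

lemma rank_less_card:
  assumes "finite V" "x \<in> V"
  shows "rank V f x < card V"
  unfolding rank_def using assms by (intro psubset_card_mono) auto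

lemma rank_onto_interval:
  assumes "inj_on f V" "f ` V = {a..b}" "x \<in> V"
  shows "rank V f x = f x - a"
proof -
  have "f ` {y \<in> V. f y < f x} = {a..<f x}"
  proof (intro equalityI subsetI)
    fix z assume z: "z \<in> {a..<f x}"
    moreover have "f x \<in> {a..b}" using assms by blast
    ultimately have "z \<in> f ` V" using assms(2) by auto
    with z show "z \<in> f ` {y \<in> V. f y < f x}" by auto
  qed (use assms in auto)
  moreover have "inj_on f {y \<in> V. f y < f x}" using assms(1) by (rule inj_on_subset) auto
  ultimately show ?thesis unfolding rank_def by (metis card_atLeastLessThan card_image)
qed

lemma inj_on_onto_interval_same_order_eq:
  fixes f g :: "nat \<Rightarrow> nat"
  assumes "inj_on f V" "inj_on g V" "f ` V = {a..b}" "g ` V = {a..b}"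
    and "\<And>x y. x \<in> V \<Longrightarrow> y \<in> V \<Longrightarrow> f x < f y \<longleftrightarrow> g x < g y" and "x \<in> V"
  shows "f x = g x"
proof -
  have "{y \<in> V. f y < f x} = {y \<in> V. g y < g x}" using assms(5,6) by auto
  then have "rank V f x = rank V g x" by (simp add: rank_def)
  then have "f x - a = g x - a" using rank_onto_interval assms by metis
  moreover have "a \<le> f x" "a \<le> g x" using assms(3,4,6) by auto
  ultimately show ?thesis by simp
qed

lemma topk_same_order_outside:
  assumes "\<rho> \<in> topk n cs" "\<tau> permutes {1..n}"
    and "discordant_pairs n (inv \<rho>) (inv \<tau>) (\<lambda>x y. x \<notin> set cs \<and> y \<notin> set cs) = {}"
    and "x \<in> {1..n} - set cs" "y \<in> {1..n} - set cs"
  shows "inv \<rho> x < inv \<rho> y \<longleftrightarrow> inv \<tau> x < inv \<tau> y"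
proof -
  have no_disc: "\<not> discordant (inv \<rho>) (inv \<tau>) u v"
    if "u \<in> {1..n} - set cs" "v \<in> {1..n} - set cs" for u v
  proof (cases u v rule: linorder_cases)
    case greater
    then show ?thesis using assms(3) that discordant_commute by (fastforce simp: discordant_pairs_def)
  qed (use assms(3) that in \<open>auto simp: discordant_pairs_def discordant_def\<close>)
  have "x = y \<or> inv \<rho> x \<noteq> inv \<rho> y \<and> inv \<tau> x \<noteq> inv \<tau> y"
    using permutes_inj[OF permutes_inv[OF topk_permutes[OF assms(1)]]]
      permutes_inj[OF permutes_inv[OF assms(2)]] by (auto dest: injD)
  then show ?thesis using no_disc[OF assms(4,5)] unfolding discordant_def by auto
qed

lemma topk_agreeing_outside_unique:
  assumes "\<tau> permutes {1..n}" "distinct cs" "set cs \<subseteq> {1..n}"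
    and "\<rho> \<in> topk n cs" "discordant_pairs n (inv \<rho>) (inv \<tau>) (\<lambda>x y. x \<notin> set cs \<and> y \<notin> set cs) = {}"
    and "\<rho>' \<in> topk n cs" "discordant_pairs n (inv \<rho>') (inv \<tau>) (\<lambda>x y. x \<notin> set cs \<and> y \<notin> set cs) = {}"
  shows "\<rho> = \<rho>'"
proof -
  note perm = topk_permutes[OF assms(4)] topk_permutes[OF assms(6)]
  have "inv \<rho> x = inv \<rho>' x" for x
  proof (cases "x \<in> {1..n} - set cs")
    case True
    show ?thesis
    proof (rule inj_on_onto_interval_same_order_eq[where f = "inv \<rho>" and g = "inv \<rho>'"
          and V = "{1..n} - set cs" and a = "length cs + 1" and b = n])
      show "inj_on (inv \<rho>) ({1..n} - set cs)" "inj_on (inv \<rho>') ({1..n} - set cs)"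
        using perm by (auto intro: permutes_inj_on permutes_inv)
      show "inv \<rho> ` ({1..n} - set cs) = {length cs + 1..n}" "inv \<rho>' ` ({1..n} - set cs) = {length cs + 1..n}"
        using topk_inv_image_compl assms by blast+
      show "inv \<rho> y < inv \<rho> z \<longleftrightarrow> inv \<rho>' y < inv \<rho>' z"
        if "y \<in> {1..n} - set cs" "z \<in> {1..n} - set cs" for y z
        using topk_same_order_outside[OF assms(4,1,5) that] topk_same_order_outside[OF assms(6,1,7) that]
        by simp
    qed (rule True)
  next
    case False
    then show ?thesis
      using topk_inv_eq_on_set[OF assms(4,6)] permutes_not_in[OF permutes_inv[OF perm(1)]]
        permutes_not_in[OF permutes_inv[OF perm(2)]] by (metis DiffI)
  qed
  then show ?thesis by (metis ext perm permutes_inv_inv)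
qed

text \<open>The position map of the ranking in \<open>topk n cs\<close> that orders the free items as \<open>t\<close> does.\<close>

definition completion_pos :: "nat \<Rightarrow> nat list \<Rightarrow> (nat \<Rightarrow> nat) \<Rightarrow> nat \<Rightarrow> nat" where
  "completion_pos n cs t x =
    (if x \<in> set cs then (THE i. i < length cs \<and> cs ! i = x) + 1
     else if x \<in> {1..n} then length cs + 1 + rank ({1..n} - set cs) t x else x)"

lemma completion_pos_nth:
  assumes "distinct cs" "i < length cs"
  shows "completion_pos n cs t (cs ! i) = i + 1"
  using assms by (auto simp: completion_pos_def nth_eq_iff_index_eq intro!: the_equality)

lemma completion_pos_free:
  "x \<in> {1..n} - set cs \<Longrightarrow> completion_pos n cs t x = length cs + 1 + rank ({1..n} - set cs) t x"
  by (simp add: completion_pos_def)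

lemma completion_pos_permutes:
  assumes "distinct cs" "set cs \<subseteq> {1..n}" "inj_on t {1..n}"
  shows "completion_pos n cs t permutes {1..n}"
proof -
  let ?p = "completion_pos n cs t" and ?V = "{1..n} - set cs"
  have card_V: "card ?V = n - length cs"
    using assms(1,2) by (simp add: card_Diff_subset distinct_card)
  have in_set: "\<exists>i < length cs. cs ! i = x \<and> ?p x = i + 1" if "x \<in> set cs" for x
    using completion_pos_nth[OF assms(1)] that by (metis in_set_conv_nth)
  have p_inj: "inj_on ?p {1..n}"
  proof (rule inj_onI)
    fix x y assume xy: "x \<in> {1..n}" "y \<in> {1..n}" "?p x = ?p y"
    consider "x \<in> set cs" "y \<in> set cs" | "x \<in> ?V" "y \<in> ?V" | "x \<in> set cs \<longleftrightarrow> y \<notin> set cs"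
      using xy(1,2) by blast
    then show "x = y"
    proof cases
      case 1
      then show ?thesis using xy(3) in_set[OF 1(1)] in_set[OF 1(2)] by auto
    next
      case 2
      then have "rank ?V t x = rank ?V t y" using xy(3) by (simp add: completion_pos_free)
      then have "t x = t y" using rank_less_rank[OF _ 2] rank_less_rank[OF _ 2(2,1)]
        by (metis finite_Diff finite_atLeastAtMost less_irrefl linorder_neqE_nat)
      then show ?thesis using assms(3) xy(1,2) by (auto dest: inj_onD)
    next
      case 3
      then show ?thesis using xy in_set[of x] in_set[of y] completion_pos_free[of x n cs t]
          completion_pos_free[of y n cs t] by auto
    qed
  qed
  have "?p ` {1..n} \<subseteq> {1..n}"
  proof (rule image_subsetI)
    fix x assume "x \<in> {1..n}"
    then show "?p x \<in> {1..n}"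
      using in_set[of x] rank_less_card[of ?V x t] card_V length_le_if_distinct_subset[OF assms(1,2)]
        completion_pos_free[of x n cs t] by fastforce
  qed
  then have "bij_betw ?p {1..n} {1..n}"
    using p_inj endo_inj_surj[OF _ _ p_inj] by (simp add: bij_betw_def)
  moreover have "?p x = x" if "x \<notin> {1..n}" for x
    using that assms(2) unfolding completion_pos_def by auto
  ultimately show ?thesis by (rule bij_imp_permutes)
qed

lemma topk_agreeing_outside_exists:
  assumes "\<tau> permutes {1..n}" "distinct cs" "set cs \<subseteq> {1..n}"
  obtains \<rho> where "\<rho> \<in> topk n cs"
    "discordant_pairs n (inv \<rho>) (inv \<tau>) (\<lambda>x y. x \<notin> set cs \<and> y \<notin> set cs) = {}"
proof
  let ?V = "{1..n} - set cs" and ?t = "inv \<tau>"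
  let ?p = "completion_pos n cs ?t"
  have p_perm: "?p permutes {1..n}"
    using completion_pos_permutes[OF assms(2,3)] permutes_inj_on[OF permutes_inv[OF assms(1)]] .
  show "inv ?p \<in> topk n cs"
    unfolding topk_def
  proof (intro CollectI conjI allI impI)
    show "inv ?p permutes {1..n}" using permutes_inv[OF p_perm] .
    fix i assume "i < length cs"
    then show "inv ?p (i + 1) = cs ! i"
      using completion_pos_nth[OF assms(2)] permutes_inv_eq[OF p_perm] by metis
  qed
  have "\<not> discordant ?p ?t x y" if "x \<in> ?V" "y \<in> ?V" for x y
    using that rank_less_rank[of ?V x y ?t] rank_less_rank[of ?V y x ?t]
    unfolding discordant_def by (auto simp: completion_pos_free)
  then show "discordant_pairs n (inv (inv ?p)) ?t (\<lambda>x y. x \<notin> set cs \<and> y \<notin> set cs) = {}"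
    unfolding permutes_inv_inv[OF p_perm] discordant_pairs_def by blast
qed

lemma proj_characterization:
  assumes "\<tau> permutes {1..n}" "distinct cs" "set cs \<subseteq> {1..n}"
  shows "proj n cs \<tau> \<in> topk n cs"
    and "discordant_pairs n (inv (proj n cs \<tau>)) (inv \<tau>) (\<lambda>x y. x \<notin> set cs \<and> y \<notin> set cs) = {}"
proof -
  obtain \<rho>0 where \<rho>0: "\<rho>0 \<in> topk n cs"
    "discordant_pairs n (inv \<rho>0) (inv \<tau>) (\<lambda>x y. x \<notin> set cs \<and> y \<notin> set cs) = {}"
    using topk_agreeing_outside_exists[OF assms] .
  have "proj n cs \<tau> = \<rho>0"
    unfolding proj_def
  proof (rule the_equality)
    show "\<rho>0 \<in> topk n cs \<and> (\<forall>\<rho>'\<in>topk n cs. kendall n \<rho>0 \<tau> \<le> kendall n \<rho>' \<tau>)"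
      using \<rho>0 kendall_topk_split[OF _ \<rho>0(1), of _ \<tau>] by simp
    fix \<rho> assume \<rho>: "\<rho> \<in> topk n cs \<and> (\<forall>\<rho>'\<in>topk n cs. kendall n \<rho> \<tau> \<le> kendall n \<rho>' \<tau>)"
    then have "kendall n \<rho> \<tau> \<le> kendall n \<rho>0 \<tau>" using \<rho>0(1) by blast
    then have "card (discordant_pairs n (inv \<rho>) (inv \<tau>) (\<lambda>x y. x \<notin> set cs \<and> y \<notin> set cs)) = 0"
      using kendall_topk_split[OF conjunct1[OF \<rho>] \<rho>0(1), of \<tau>]
        kendall_topk_split[OF \<rho>0(1) \<rho>0(1), of \<tau>] \<rho>0(2) by simp
    then show "\<rho> = \<rho>0"
      using topk_agreeing_outside_unique[OF assms _ _ \<rho>0] \<rho> finite_discordant_pairs by simp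
  qed
  then show "proj n cs \<tau> \<in> topk n cs"
    "discordant_pairs n (inv (proj n cs \<tau>)) (inv \<tau>) (\<lambda>x y. x \<notin> set cs \<and> y \<notin> set cs) = {}"
    using \<rho>0 by simp_all
qed

lemma kendall_proj:
  assumes "\<tau> permutes {1..n}" "distinct cs" "set cs \<subseteq> {1..n}" "\<rho> \<in> topk n cs"
  shows "kendall n \<tau> (proj n cs \<tau>) =
      card (discordant_pairs n (inv \<rho>) (inv \<tau>) (\<lambda>x y. x \<in> set cs \<or> y \<in> set cs))"
  using kendall_topk_split[OF proj_characterization(1)[OF assms(1-3)] assms(4)]
    proj_characterization(2)[OF assms(1-3)] by (simp add: kendall_commute)

definition reverse_tail :: "nat \<Rightarrow> nat \<Rightarrow> nat \<Rightarrow> nat" where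
  "reverse_tail n k i = (if k < i \<and> i \<le> n then n + 1 + k - i else i)"

lemma reverse_tail_involution: "reverse_tail n k \<circ> reverse_tail n k = id"
  by (rule ext) (auto simp: reverse_tail_def)

lemma inv_reverse_tail: "inv (reverse_tail n k) = reverse_tail n k"
  by (rule inv_unique_comp) (simp_all add: reverse_tail_involution)

lemma reverse_tail_permutes: "reverse_tail n k permutes {1..n}"
proof (rule bij_imp_permutes)
  have "bij (reverse_tail n k)" by (rule o_bij[OF reverse_tail_involution reverse_tail_involution])
  moreover have "reverse_tail n k ` {1..n} \<subseteq> {1..n}" by (auto simp: reverse_tail_def)
  ultimately show "bij_betw (reverse_tail n k) {1..n} {1..n}"
    by (metis bij_betw_def bij_betw_subset endo_inj_surj finite_atLeastAtMost inj_on_subset subset_UNIV)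
  show "reverse_tail n k x = x" if "x \<notin> {1..n}" for x
    using that by (auto simp: reverse_tail_def)
qed

lemma antithetic_eq_comp_reverse_tail:
  assumes "\<sigma> \<in> topk n cs"
  shows "antithetic n cs \<sigma> = \<sigma> \<circ> reverse_tail n (length cs)"
proof
  fix i
  show "antithetic n cs \<sigma> i = (\<sigma> \<circ> reverse_tail n (length cs)) i"
  proof (cases "1 \<le> i \<and> i \<le> length cs")
    case True
    then have "i - 1 < length cs" by linarith
    then have "\<sigma> (i - 1 + 1) = cs ! (i - 1)" using assms unfolding topk_def by blast
    then show ?thesis using True by (simp add: antithetic_def reverse_tail_def)
  next
    case False
    moreover have "\<sigma> i = i" if "i \<notin> {1..n}"
      using permutes_not_in[OF topk_permutes[OF assms] that] .
    ultimately show ?thesis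
      by (auto simp: antithetic_def reverse_tail_def Suc_diff_le)
  qed
qed

lemma not_discordant_if_meets_top:
  assumes "\<And>z. z \<in> T \<Longrightarrow> g z = f z \<and> f z \<le> l" "\<And>z. z \<in> U - T \<Longrightarrow> l < f z \<and> l < g z"
    and "x \<in> U" "y \<in> U" "x \<in> T \<or> y \<in> T"
  shows "\<not> discordant f g x y"
  using assms(1)[of x] assms(1)[of y] assms(2)[of x] assms(2)[of y] assms(3-5)
  unfolding discordant_def by (cases "x \<in> T"; cases "y \<in> T") auto

lemma discordant_reverse_iff:
  assumes "f x \<noteq> f y" "g x \<noteq> g y" "g x \<le> N" "g y \<le> N" "g' x = N - g x" "g' y = N - g y"
  shows "discordant f g' x y \<longleftrightarrow> \<not> discordant f g x y"
  using assms unfolding discordant_def by auto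

text \<open>A pair meeting the common top block is concordant for both \<open>t\<close> and \<open>t'\<close>; any other pair
  is discordant for exactly one of them, since \<open>t'\<close> reverses the order of \<open>t\<close> below the top.\<close>

lemma discordant_pairs_reverse_partition:
  fixes r t t' :: "nat \<Rightarrow> nat"
  assumes top: "\<And>z. z \<in> T \<Longrightarrow> t z = r z \<and> t' z = r z \<and> r z \<le> l"
    and rest: "\<And>z. z \<in> {1..n} - T \<Longrightarrow> l < r z \<and> l < t z \<and> l < t' z \<and> t z \<le> N \<and> t' z = N - t z"
    and "inj_on r {1..n}" "inj_on t {1..n}"
  shows "discordant_pairs n r t P \<inter> discordant_pairs n r t' P = {}"
    and "discordant_pairs n r t P \<union> discordant_pairs n r t' P =
      {(x, y) \<in> ordered_pairs ({1..n} - T). P x y}"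
proof -
  have meets_top: "\<not> discordant r g x y"
    if "g = t \<or> g = t'" "x \<in> {1..n}" "y \<in> {1..n}" "x \<in> T \<or> y \<in> T" for g x y
    by (rule not_discordant_if_meets_top[where T = T and U = "{1..n}" and l = l])
      (use that top rest in auto)
  have reverse: "discordant r t' x y \<longleftrightarrow> \<not> discordant r t x y"
    if "x \<in> {1..n} - T" "y \<in> {1..n} - T" "x < y" for x y
    using rest[OF that(1)] rest[OF that(2)] that assms(3,4)
    by (intro discordant_reverse_iff) (auto dest: inj_onD)
  have disjoint: False if "(x, y) \<in> discordant_pairs n r t P" "(x, y) \<in> discordant_pairs n r t' P" for x y
    using that meets_top[of t x y] reverse[of x y] by (auto simp: discordant_pairs_def)
  then show "discordant_pairs n r t P \<inter> discordant_pairs n r t' P = {}" by auto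
  show "discordant_pairs n r t P \<union> discordant_pairs n r t' P =
      {(x, y) \<in> ordered_pairs ({1..n} - T). P x y}"
  proof (intro equalityI subsetI)
    fix p assume "p \<in> discordant_pairs n r t P \<union> discordant_pairs n r t' P"
    then show "p \<in> {(x, y) \<in> ordered_pairs ({1..n} - T). P x y}"
      using meets_top[of t "fst p" "snd p"] meets_top[of t' "fst p" "snd p"]
      by (auto simp: discordant_pairs_def ordered_pairs_def)
  next
    fix p assume "p \<in> {(x, y) \<in> ordered_pairs ({1..n} - T). P x y}"
    then show "p \<in> discordant_pairs n r t P \<union> discordant_pairs n r t' P"
      using reverse[of "fst p" "snd p"] by (auto simp: discordant_pairs_def ordered_pairs_def)
  qed
qed

lemma topk_take_inv_top:
  assumes "\<sigma> \<in> topk n (take l as)" "\<rho> \<in> topk n as" "l \<le> length as" "z \<in> set (take l as)"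
  shows "inv \<sigma> z = inv \<rho> z \<and> inv \<rho> z \<le> l"
proof -
  obtain i where i: "i < l" "z = as ! i"
    using assms(3,4) by (auto simp: in_set_conv_nth)
  then have "inv \<sigma> z = i + 1" using topk_inv_nth[OF assms(1), of i] assms(3) by simp
  moreover have "inv \<rho> z = i + 1" using topk_inv_nth[OF assms(2), of i] i assms(3) by simp
  ultimately show ?thesis using i by simp
qed

lemma topk_take_inv_rest:
  assumes "\<sigma> \<in> topk n (take l as)" "\<rho> \<in> topk n as" "l \<le> length as"
    and "z \<in> {1..n} - set (take l as)"
  shows "l < inv \<rho> z \<and> l < inv \<sigma> z \<and> inv \<sigma> z \<le> n"
proof -
  have "l < inv \<rho> z"
  proof (cases "z \<in> set as")
    case True
    then obtain i where i: "i < length as" "z = as ! i" by (auto simp: in_set_conv_nth)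
    then have "\<not> i < l" using assms(4) by (auto simp: in_set_conv_nth)
    then show ?thesis using topk_inv_nth[OF assms(2) i(1)] i(2) by simp
  next
    case False
    then show ?thesis using topk_inv_notin_set[OF assms(2), of z] assms(3,4) by simp
  qed
  then show ?thesis using topk_inv_notin_set[OF assms(1), of z] assms(3,4) by simp
qed

lemma card_discordant_meeting_plus_reversed:
  assumes "distinct as" "set as \<subseteq> {1..n}" "l \<le> length as"
    and "\<sigma> \<in> topk n (take l as)" "\<rho> \<in> topk n as"
  defines "M \<equiv> \<lambda>x y. x \<in> set as \<or> y \<in> set as"
  shows "card (discordant_pairs n (inv \<rho>) (inv \<sigma>) M)
      + card (discordant_pairs n (inv \<rho>) (inv (\<sigma> \<circ> reverse_tail n l)) M)
      = (n - length as) * (length as - l) + ((length as - l) choose 2)"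
proof -
  define T where "T = set (take l as)"
  have length_take: "length (take l as) = l" using assms(3) by simp
  have inv_comp: "inv (\<sigma> \<circ> reverse_tail n l) = reverse_tail n l \<circ> inv \<sigma>"
    using o_inv_distrib[OF permutes_bij[OF topk_permutes[OF assms(4)]]
        permutes_bij[OF reverse_tail_permutes]] by (simp add: inv_reverse_tail)
  have top: "inv \<sigma> z = inv \<rho> z \<and> (reverse_tail n l \<circ> inv \<sigma>) z = inv \<rho> z \<and> inv \<rho> z \<le> l"
    if "z \<in> T" for z
    using topk_take_inv_top[OF assms(4,5,3), of z] that unfolding T_def by (auto simp: reverse_tail_def)
  have rest: "l < inv \<rho> z \<and> l < inv \<sigma> z \<and> l < (reverse_tail n l \<circ> inv \<sigma>) z \<and>
      inv \<sigma> z \<le> n + 1 + l \<and> (reverse_tail n l \<circ> inv \<sigma>) z = n + 1 + l - inv \<sigma> z"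
    if "z \<in> {1..n} - T" for z
    using topk_take_inv_rest[OF assms(4,5,3), of z] that unfolding T_def by (auto simp: reverse_tail_def)
  have inj: "inj_on (inv \<rho>) {1..n}" "inj_on (inv \<sigma>) {1..n}"
    using topk_permutes[OF assms(4)] topk_permutes[OF assms(5)]
    by (auto intro: permutes_inj_on permutes_inv)
  note partition = discordant_pairs_reverse_partition
    [where T = T and P = M and t' = "reverse_tail n l \<circ> inv \<sigma>", OF top rest inj]
  have "T \<subseteq> set as" unfolding T_def by (rule set_take_subset)
  have "card (discordant_pairs n (inv \<rho>) (inv \<sigma>) M)
      + card (discordant_pairs n (inv \<rho>) (inv (\<sigma> \<circ> reverse_tail n l)) M)
      = card (discordant_pairs n (inv \<rho>) (inv \<sigma>) M
          \<union> discordant_pairs n (inv \<rho>) (reverse_tail n l \<circ> inv \<sigma>) M)"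
    unfolding inv_comp
    by (rule card_Un_disjoint[OF finite_discordant_pairs finite_discordant_pairs partition(1), symmetric])
  also have "\<dots> = card {(x, y) \<in> ordered_pairs ({1..n} - T). M x y}"
    using partition(2) by simp
  also have "\<dots> = card (ordered_pairs ({1..n} - T) - ordered_pairs ({1..n} - set as))"
    by (rule arg_cong[where f = card]) (auto simp: M_def ordered_pairs_def)
  also have "\<dots> = card ({1..n} - set as) * card (set as - T) + (card (set as - T) choose 2)"
    using \<open>T \<subseteq> set as\<close> assms(2) by (intro card_ordered_pairs_Diff) auto
  also have "card ({1..n} - set as) = n - length as"
    using assms(1,2) by (simp add: card_Diff_subset distinct_card)
  also have "card (set as - T) = length as - l"
    using assms(1) \<open>T \<subseteq> set as\<close> length_take distinct_card[of as] distinct_card[of "take l as"]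
    unfolding T_def by (simp add: card_Diff_subset)
  finally show ?thesis .
qed

theorem lemma8:
  fixes n l :: nat and as :: "nat list" and \<sigma> :: "nat \<Rightarrow> nat"
  assumes "distinct as" and "set as \<subseteq> {1..n}" and "l \<le> length as"
    and "\<sigma> \<in> topk n (take l as)"
  shows "int (kendall n \<sigma> (proj n as \<sigma>)) =
      int ((n - l) - (length as - l)) * int (length as - l) + int ((length as - l) choose 2)
      - int (kendall n (antithetic n (take l as) \<sigma>) (proj n as (antithetic n (take l as) \<sigma>)))"
proof -
  obtain \<rho> where \<rho>: "\<rho> \<in> topk n as"
    using topk_agreeing_outside_exists[OF topk_permutes[OF assms(4)] assms(1,2)] by blast
  have antithetic: "antithetic n (take l as) \<sigma> = \<sigma> \<circ> reverse_tail n l"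
    using antithetic_eq_comp_reverse_tail[OF assms(4)] assms(3) by simp
  have "\<sigma> \<circ> reverse_tail n l permutes {1..n}"
    by (rule permutes_compose[OF reverse_tail_permutes topk_permutes[OF assms(4)]])
  then have "kendall n \<sigma> (proj n as \<sigma>) + kendall n (antithetic n (take l as) \<sigma>)
        (proj n as (antithetic n (take l as) \<sigma>))
      = (n - length as) * (length as - l) + ((length as - l) choose 2)"
    unfolding antithetic
    using kendall_proj[OF topk_permutes[OF assms(4)] assms(1,2) \<rho>] kendall_proj[OF _ assms(1,2) \<rho>]
      card_discordant_meeting_plus_reversed[OF assms \<rho>] by simp
  moreover have "(n - l) - (length as - l) = n - length as"
    using length_le_if_distinct_subset[OF assms(1,2)] assms(3) by simp
  ultimately show ?thesis by (metis add_diff_cancel_right' of_nat_add of_nat_mult)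
qed

end
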